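(* Let $A$ be an associative algebra, $\sigma,\tau:A\to A$ two commuting algebra maps, and $R:A\to A$ a $\{\sigma,\tau\}$-Rota-Baxter operator commuting with $\sigma$ and $\tau$. Define $x\prec y=\sigma(x)R(y)$ and $x\succ y=R(x)\tau(y)$ for $x,y\in A$. Then $(A,\prec,\succ,\sigma,\tau)$ is a BiHom-dendriform algebra. Moreover, setting $x*y=x\prec y+x\succ y$, the 4-tuple $(A,*,\sigma,\tau)$ is a BiHom-associative algebra and $R$ is a morphism of BiHom-associative algebras from $(A,*,\sigma,\tau)$ to the Yau twist $A_{(\sigma,\tau)}=(A,\mu\circ(\sigma\otimes\tau),\sigma,\tau)$, i.e. $R$ commutes with $\sigma,\tau$ and $R(x*y)=\sigma(R(x))\tau(R(y))$ for all $x,y$.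
   Context: For algebra maps $\sigma,\tau$ of an algebra $A$, a linear map $R$ is a $\{\sigma,\tau\}$-Rota-Baxter operator if $R(\sigma(a))R(\tau(b))=R\big(\sigma(a)R(b)+R(a)\tau(b)\big)$ for all $a,b\in A$. A BiHom-associative algebra $(A,\mu,\alpha,\beta)$: linear space with bilinear multiplication $\mu(x\otimes y)=xy$ and linear maps $\alpha,\beta$ with $\alpha\beta=\beta\alpha$, $\alpha,\beta$ multiplicative, and $\alpha(x)(yz)=(xy)\beta(z)$ for all $x,y,z$. A BiHom-dendriform algebra $(A,\prec,\succ,\alpha',\beta')$: linear space with bilinear operations $\prec,\succ$ and commuting linear maps $\alpha',\beta'$ multiplicative for $\prec$ and $\succ$, such that $(x\prec y)\prec\beta'(z)=\alpha'(x)\prec(y\prec z+y\succ z)$, $(x\succ y)\prec\beta'(z)=\alpha'(x)\succ(y\prec z)$, $\alpha'(x)\succ(y\succ z)=(x\prec y+x\succ y)\succ\beta'(z)$ for all $x,y,z$. *)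

theory Defs
  imports Complex_Main
begin

text \<open>An associative (not necessarily unital) algebra over a field 'k is modelled
by a type 'a of class ring (associative multiplication, distributive) together
with a scalar multiplication scale making it a 'k-vector space such that the
multiplication is 'k-bilinear.\<close>

definition assoc_algebra :: "('k::field \<Rightarrow> 'a::ring \<Rightarrow> 'a) \<Rightarrow> bool" where
  "assoc_algebra scale \<longleftrightarrow> Vector_Spaces.vector_space scale \<and>
     (\<forall>c x y. scale c (x * y) = scale c x * y \<and> scale c (x * y) = x * scale c y)"

definition bilinear_op :: "('k::field \<Rightarrow> 'a::ab_group_add \<Rightarrow> 'a) \<Rightarrow> ('a \<Rightarrow> 'a \<Rightarrow> 'a) \<Rightarrow> bool" where
  "bilinear_op scale mu \<longleftrightarrow> (\<forall>x. Vector_Spaces.linear scale scale (mu x)) \<and>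
     (\<forall>y. Vector_Spaces.linear scale scale (\<lambda>x. mu x y))"

definition alg_map :: "('k::field \<Rightarrow> 'a::ring \<Rightarrow> 'a) \<Rightarrow> ('a \<Rightarrow> 'a) \<Rightarrow> bool" where
  "alg_map scale f \<longleftrightarrow> Vector_Spaces.linear scale scale f \<and> (\<forall>x y. f (x * y) = f x * f y)"

definition rota_baxter_st ::
  "('k::field \<Rightarrow> 'a::ring \<Rightarrow> 'a) \<Rightarrow> ('a \<Rightarrow> 'a) \<Rightarrow> ('a \<Rightarrow> 'a) \<Rightarrow> ('a \<Rightarrow> 'a) \<Rightarrow> bool" where
  "rota_baxter_st scale \<sigma> \<tau> R \<longleftrightarrow> Vector_Spaces.linear scale scale R \<and>
     (\<forall>a b. R (\<sigma> a) * R (\<tau> b) = R (\<sigma> a * R b + R a * \<tau> b))"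

definition bihom_assoc ::
  "('k::field \<Rightarrow> 'a::ab_group_add \<Rightarrow> 'a) \<Rightarrow> ('a \<Rightarrow> 'a \<Rightarrow> 'a) \<Rightarrow> ('a \<Rightarrow> 'a) \<Rightarrow> ('a \<Rightarrow> 'a) \<Rightarrow> bool" where
  "bihom_assoc scale mu \<alpha> \<beta> \<longleftrightarrow> bilinear_op scale mu \<and>
     Vector_Spaces.linear scale scale \<alpha> \<and> Vector_Spaces.linear scale scale \<beta> \<and>
     \<alpha> \<circ> \<beta> = \<beta> \<circ> \<alpha> \<and>
     (\<forall>x y. \<alpha> (mu x y) = mu (\<alpha> x) (\<alpha> y)) \<and> (\<forall>x y. \<beta> (mu x y) = mu (\<beta> x) (\<beta> y)) \<and>
     (\<forall>x y z. mu (\<alpha> x) (mu y z) = mu (mu x y) (\<beta> z))"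

definition bihom_dendriform ::
  "('k::field \<Rightarrow> 'a::ab_group_add \<Rightarrow> 'a) \<Rightarrow> ('a \<Rightarrow> 'a \<Rightarrow> 'a) \<Rightarrow> ('a \<Rightarrow> 'a \<Rightarrow> 'a)
     \<Rightarrow> ('a \<Rightarrow> 'a) \<Rightarrow> ('a \<Rightarrow> 'a) \<Rightarrow> bool" where
  "bihom_dendriform scale l r \<alpha> \<beta> \<longleftrightarrow> bilinear_op scale l \<and> bilinear_op scale r \<and>
     Vector_Spaces.linear scale scale \<alpha> \<and> Vector_Spaces.linear scale scale \<beta> \<and>
     \<alpha> \<circ> \<beta> = \<beta> \<circ> \<alpha> \<and>
     (\<forall>x y. \<alpha> (l x y) = l (\<alpha> x) (\<alpha> y)) \<and> (\<forall>x y. \<beta> (l x y) = l (\<beta> x) (\<beta> y)) \<and>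
     (\<forall>x y. \<alpha> (r x y) = r (\<alpha> x) (\<alpha> y)) \<and> (\<forall>x y. \<beta> (r x y) = r (\<beta> x) (\<beta> y)) \<and>
     (\<forall>x y z. l (l x y) (\<beta> z) = l (\<alpha> x) (l y z + r y z)) \<and>
     (\<forall>x y z. l (r x y) (\<beta> z) = r (\<alpha> x) (l y z)) \<and>
     (\<forall>x y z. r (\<alpha> x) (r y z) = r (l x y + r x y) (\<beta> z))"

definition bihom_assoc_morphism ::
  "('k::field \<Rightarrow> 'a::ab_group_add \<Rightarrow> 'a) \<Rightarrow> ('a \<Rightarrow> 'a \<Rightarrow> 'a) \<Rightarrow> ('a \<Rightarrow> 'a) \<Rightarrow> ('a \<Rightarrow> 'a)
     \<Rightarrow> ('a \<Rightarrow> 'a \<Rightarrow> 'a) \<Rightarrow> ('a \<Rightarrow> 'a) \<Rightarrow> ('a \<Rightarrow> 'a) \<Rightarrow> ('a \<Rightarrow> 'a) \<Rightarrow> bool" where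
  "bihom_assoc_morphism scale mu1 \<alpha>1 \<beta>1 mu2 \<alpha>2 \<beta>2 f \<longleftrightarrow>
     Vector_Spaces.linear scale scale f \<and> f \<circ> \<alpha>1 = \<alpha>2 \<circ> f \<and> f \<circ> \<beta>1 = \<beta>2 \<circ> f \<and>
     (\<forall>x y. f (mu1 x y) = mu2 (f x) (f y))"

end

theory Submission
  imports Defs
begin

text \<open>With \<open>x \<prec> y = \<sigma> x * R y\<close> and \<open>x \<succ> y = R x * \<tau> y\<close>, each of the three dendriform
axioms reduces, after moving \<sigma> and \<tau> past R, to the Rota-Baxter identity in the form
\<open>R (\<sigma> a * R b + R a * \<tau> b) = \<sigma> (R a) * \<tau> (R b)\<close>; the same identity says that R maps
\<open>x * y = x \<prec> y + x \<succ> y\<close> to the Yau-twisted product of \<open>R x\<close> and \<open>R y\<close>. BiHom-associativity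
of \<open>*\<close> holds for the sum of the two operations of any BiHom-dendriform algebra, and the Yau
twist of an associative algebra by commuting algebra maps is BiHom-associative.\<close>

lemma bilinear_op_mult_linear:
  assumes "assoc_algebra scale"
    and "Vector_Spaces.linear scale scale f" and "Vector_Spaces.linear scale scale g"
  shows "bilinear_op scale (\<lambda>x y. f x * g y)"
proof -
  have vs: "vector_space scale"
    and left: "\<And>c x y. scale c (x * y) = scale c x * y"
    and right: "\<And>c x y. scale c (x * y) = x * scale c y"
    using assms(1) unfolding assoc_algebra_def by blast+
  show ?thesis
    using vs assms(2,3) unfolding bilinear_op_def Vector_Spaces.linear_iff
    by (auto simp: distrib_left distrib_right left[symmetric] right[symmetric])
qed

lemma bilinear_op_add:
  assumes "bilinear_op scale m1" and "bilinear_op scale m2"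
  shows "bilinear_op scale (\<lambda>x y. m1 x y + m2 x y)"
  using assms unfolding bilinear_op_def Vector_Spaces.linear_iff
  by (auto simp: algebra_simps vector_space.vector_space_assms(1))

lemma bilinear_op_additive:
  assumes "bilinear_op scale m"
  shows "m x (y + z) = m x y + m x z" and "m (x + y) z = m x z + m y z"
  using assms unfolding bilinear_op_def Vector_Spaces.linear_iff by auto

lemma bihom_dendriform_imp_bihom_assoc:
  assumes "bihom_dendriform scale l r \<alpha> \<beta>"
  shows "bihom_assoc scale (\<lambda>x y. l x y + r x y) \<alpha> \<beta>"
proof -
  have l: "bilinear_op scale l" and r: "bilinear_op scale r"
    and \<alpha>: "Vector_Spaces.linear scale scale \<alpha>" and \<beta>: "Vector_Spaces.linear scale scale \<beta>"
    and dend: "\<And>x y z. l (l x y) (\<beta> z) = l (\<alpha> x) (l y z + r y z)"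
      "\<And>x y z. l (r x y) (\<beta> z) = r (\<alpha> x) (l y z)"
      "\<And>x y z. r (\<alpha> x) (r y z) = r (l x y + r x y) (\<beta> z)"
    using assms unfolding bihom_dendriform_def by auto
  have "l (\<alpha> x) (l y z + r y z) + r (\<alpha> x) (l y z + r y z)
      = l (l x y + r x y) (\<beta> z) + r (l x y + r x y) (\<beta> z)" for x y z
    by (simp add: bilinear_op_additive[OF l] bilinear_op_additive[OF r] dend add.assoc)
  moreover have "\<alpha> (a + b) = \<alpha> a + \<alpha> b" "\<beta> (a + b) = \<beta> a + \<beta> b" for a b
    using \<alpha> \<beta> unfolding Vector_Spaces.linear_iff by auto
  ultimately show ?thesis
    using assms bilinear_op_add[OF l r]
    unfolding bihom_dendriform_def bihom_assoc_def by auto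
qed

lemma yau_twist_bihom_assoc:
  assumes "assoc_algebra scale" and "alg_map scale \<sigma>" and "alg_map scale \<tau>"
    and "\<sigma> \<circ> \<tau> = \<tau> \<circ> \<sigma>"
  shows "bihom_assoc scale (\<lambda>x y. \<sigma> x * \<tau> y) \<sigma> \<tau>"
proof -
  have "\<sigma> (\<tau> x) = \<tau> (\<sigma> x)" for x
    using assms(4) by (metis comp_apply)
  with assms show ?thesis
    unfolding bihom_assoc_def alg_map_def
    by (auto simp: bilinear_op_mult_linear mult.assoc)
qed

lemma rota_baxter_st_twisted:
  assumes "rota_baxter_st scale \<sigma> \<tau> R" and "R \<circ> \<sigma> = \<sigma> \<circ> R" and "R \<circ> \<tau> = \<tau> \<circ> R"
  shows "R (\<sigma> a * R b + R a * \<tau> b) = \<sigma> (R a) * \<tau> (R b)"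
  using assms unfolding rota_baxter_st_def by (metis comp_apply)

lemma rota_baxter_bihom_dendriform:
  assumes "assoc_algebra scale"
    and "alg_map scale \<sigma>" and "alg_map scale \<tau>" and "\<sigma> \<circ> \<tau> = \<tau> \<circ> \<sigma>"
    and RB: "rota_baxter_st scale \<sigma> \<tau> R"
    and R\<sigma>: "R \<circ> \<sigma> = \<sigma> \<circ> R" and R\<tau>: "R \<circ> \<tau> = \<tau> \<circ> R"
  shows "bihom_dendriform scale (\<lambda>x y. \<sigma> x * R y) (\<lambda>x y. R x * \<tau> y) \<sigma> \<tau>"
proof -
  have \<sigma>: "Vector_Spaces.linear scale scale \<sigma>" "\<And>x y. \<sigma> (x * y) = \<sigma> x * \<sigma> y"
    and \<tau>: "Vector_Spaces.linear scale scale \<tau>" "\<And>x y. \<tau> (x * y) = \<tau> x * \<tau> y"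
    and R: "Vector_Spaces.linear scale scale R"
    using assms(2,3) RB unfolding alg_map_def rota_baxter_st_def by auto
  have commute: "\<sigma> (\<tau> x) = \<tau> (\<sigma> x)" "R (\<sigma> x) = \<sigma> (R x)" "R (\<tau> x) = \<tau> (R x)" for x
    using assms(4) R\<sigma> R\<tau> by (metis comp_apply)+
  note twisted = rota_baxter_st_twisted[OF RB R\<sigma> R\<tau>]
  have prec_prec: "\<sigma> (\<sigma> x * R y) * R (\<tau> z) = \<sigma> (\<sigma> x) * R (\<sigma> y * R z + R y * \<tau> z)"
    and succ_prec: "\<sigma> (R x * \<tau> y) * R (\<tau> z) = R (\<sigma> x) * \<tau> (\<sigma> y * R z)"
    and succ_succ: "R (\<sigma> x) * \<tau> (R y * \<tau> z) = R (\<sigma> x * R y + R x * \<tau> y) * \<tau> (\<tau> z)"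
    for x y z
    by (simp_all add: twisted \<sigma>(2) \<tau>(2) commute mult.assoc)
  show ?thesis
    using assms(4) \<sigma> \<tau> R bilinear_op_mult_linear[OF assms(1)] prec_prec succ_prec succ_succ
    unfolding bihom_dendriform_def
    by (auto simp: commute mult.assoc)
qed

lemma rota_baxter_bihom_assoc_morphism:
  assumes "rota_baxter_st scale \<sigma> \<tau> R" and "R \<circ> \<sigma> = \<sigma> \<circ> R" and "R \<circ> \<tau> = \<tau> \<circ> R"
  shows "bihom_assoc_morphism scale (\<lambda>x y. \<sigma> x * R y + R x * \<tau> y) \<sigma> \<tau>
    (\<lambda>x y. \<sigma> x * \<tau> y) \<sigma> \<tau> R"
  using assms rota_baxter_st_twisted[OF assms]
  unfolding bihom_assoc_morphism_def rota_baxter_st_def by auto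

theorem mainTheorem5:
  fixes scale :: "'k::field \<Rightarrow> 'a::ring \<Rightarrow> 'a"
    and \<sigma> \<tau> R :: "'a \<Rightarrow> 'a"
  assumes "assoc_algebra scale"
    and "alg_map scale \<sigma>" and "alg_map scale \<tau>" and "\<sigma> \<circ> \<tau> = \<tau> \<circ> \<sigma>"
    and "rota_baxter_st scale \<sigma> \<tau> R"
    and "R \<circ> \<sigma> = \<sigma> \<circ> R" and "R \<circ> \<tau> = \<tau> \<circ> R"
  shows "bihom_dendriform scale (\<lambda>x y. \<sigma> x * R y) (\<lambda>x y. R x * \<tau> y) \<sigma> \<tau>
    \<and> bihom_assoc scale (\<lambda>x y. \<sigma> x * R y + R x * \<tau> y) \<sigma> \<tau>
    \<and> bihom_assoc scale (\<lambda>x y. \<sigma> x * \<tau> y) \<sigma> \<tau>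
    \<and> bihom_assoc_morphism scale (\<lambda>x y. \<sigma> x * R y + R x * \<tau> y) \<sigma> \<tau>
        (\<lambda>x y. \<sigma> x * \<tau> y) \<sigma> \<tau> R"
proof -
  have dend: "bihom_dendriform scale (\<lambda>x y. \<sigma> x * R y) (\<lambda>x y. R x * \<tau> y) \<sigma> \<tau>"
    using assms by (rule rota_baxter_bihom_dendriform)
  show ?thesis
  proof (intro conjI)
    show "bihom_assoc scale (\<lambda>x y. \<sigma> x * R y + R x * \<tau> y) \<sigma> \<tau>"
      using bihom_dendriform_imp_bihom_assoc[OF dend] .
    show "bihom_assoc scale (\<lambda>x y. \<sigma> x * \<tau> y) \<sigma> \<tau>"
      using assms(1-4) by (rule yau_twist_bihom_assoc)
    show "bihom_assoc_morphism scale (\<lambda>x y. \<sigma> x * R y + R x * \<tau> y) \<sigma> \<tau>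
        (\<lambda>x y. \<sigma> x * \<tau> y) \<sigma> \<tau> R"
      using assms(5-7) by (rule rota_baxter_bihom_assoc_morphism)
  qed (fact dend)
qed

end
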